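(* Let $Q$ be a finite quiver with $kQ$ of finite GK-dimension. On the set of cyclic vertices of $Q$, define $u\preceq v$ if $u=v$ or there is an arrow $u\to v$ in $E_Q$. Then $\preceq$ is a partial order.
   Context: A vertex is cyclic if it lies on some cycle; when $kQ$ has finite GK-dimension (equivalently, no vertex lies on two simple cycles with distinct underlying subquivers) each cyclic vertex lies on a unique simple cycle. The Ext-quiver $E_Q$ has the cyclic vertices as vertices, and for distinct cyclic vertices $v,w$ lying on simple cycles of lengths $n,m$, one arrow $v\to w$ iff there is a path in $Q$ from $v$ to $w$ whose length is a positive multiple of $nm$. *)

theory Defs
  imports Main
begin

record ('v, 'a) quiver =
  verts :: "'v set"
  arrs  :: "'a set"
  src   :: "'a \<Rightarrow> 'v"
  tgt   :: "'a \<Rightarrow> 'v"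

definition finite_quiver :: "('v, 'a) quiver \<Rightarrow> bool" where
  "finite_quiver Q \<longleftrightarrow> finite (verts Q) \<and> finite (arrs Q) \<and>
     (\<forall>a \<in> arrs Q. src Q a \<in> verts Q \<and> tgt Q a \<in> verts Q)"

definition is_path :: "('v, 'a) quiver \<Rightarrow> 'a list \<Rightarrow> bool" where
  "is_path Q p \<longleftrightarrow> p \<noteq> [] \<and> set p \<subseteq> arrs Q \<and>
     (\<forall>i. Suc i < length p \<longrightarrow> tgt Q (p ! i) = src Q (p ! Suc i))"

definition path_from_to :: "('v, 'a) quiver \<Rightarrow> 'v \<Rightarrow> 'v \<Rightarrow> 'a list \<Rightarrow> bool" where
  "path_from_to Q v w p \<longleftrightarrow> is_path Q p \<and> src Q (hd p) = v \<and> tgt Q (last p) = w"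

text \<open>With the standard generating subspace
  V spanned by the vertices (trivial paths) and arrows, V^n has as basis the paths of length
  at most n, so GKdim kQ = limsup log(dim V^n)/log n is finite iff the number of paths of
  length at most n is bounded by a polynomial in n.  (The trivial paths contribute the
  constant card (verts Q), which does not affect polynomial growth.)\<close>
definition finite_GKdim :: "('v, 'a) quiver \<Rightarrow> bool" where
  "finite_GKdim Q \<longleftrightarrow> (\<exists>C d :: nat. \<forall>n \<ge> 1.
      card (verts Q) + card {p. is_path Q p \<and> length p \<le> n} \<le> C * n ^ d)"

definition cyclic_vertex :: "('v, 'a) quiver \<Rightarrow> 'v \<Rightarrow> bool" where
  "cyclic_vertex Q v \<longleftrightarrow> v \<in> verts Q \<and> (\<exists>p. path_from_to Q v v p)"

definition cyclic_vertices :: "('v, 'a) quiver \<Rightarrow> 'v set" where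
  "cyclic_vertices Q = {v. cyclic_vertex Q v}"

definition simple_cycle :: "('v, 'a) quiver \<Rightarrow> 'a list \<Rightarrow> bool" where
  "simple_cycle Q c \<longleftrightarrow> is_path Q c \<and> tgt Q (last c) = src Q (hd c) \<and>
     distinct (map (src Q) c)"

definition on_simple_cycle_of_length :: "('v, 'a) quiver \<Rightarrow> 'v \<Rightarrow> nat \<Rightarrow> bool" where
  "on_simple_cycle_of_length Q v n \<longleftrightarrow>
     (\<exists>c. simple_cycle Q c \<and> length c = n \<and> v \<in> src Q ` set c)"

text \<open>Arrows of the Ext-quiver E_Q: for distinct cyclic vertices v, w lying on simple cycles
  of lengths n, m, an arrow v \<rightarrow> w iff there is a path from v to w of length a positive
  multiple of n*m.  (Under finite GK-dimension the simple cycle through a cyclic vertex is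
  unique, so the lengths n, m are determined.)\<close>
definition ext_arrow :: "('v, 'a) quiver \<Rightarrow> 'v \<Rightarrow> 'v \<Rightarrow> bool" where
  "ext_arrow Q v w \<longleftrightarrow> cyclic_vertex Q v \<and> cyclic_vertex Q w \<and> v \<noteq> w \<and>
     (\<exists>n m p k. on_simple_cycle_of_length Q v n \<and> on_simple_cycle_of_length Q w m \<and>
        path_from_to Q v w p \<and> k \<ge> 1 \<and> length p = k * (n * m))"

definition ext_preceq :: "('v, 'a) quiver \<Rightarrow> ('v \<times> 'v) set" where
  "ext_preceq Q = {(u, v). u \<in> cyclic_vertices Q \<and> v \<in> cyclic_vertices Q \<and>
                          (u = v \<or> ext_arrow Q u v)}"

end

theory Submission
  imports Defs
begin

text \<open>If kQ has polynomial growth, two closed walks X \<noteq> Y of the same length L at a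
  vertex are impossible: the 2^k words of length k in X and Y would give 2^k distinct
  paths of length k L.  Antisymmetry: arrows u \<rightarrow> v and v \<rightarrow> u give a closed walk c at u
  through v, whose first segment p has length k n m for the simple cycle cu of length n
  at u; uniqueness forces c^n = cu^|c|, so p = cu^(k m) ends at u, i.e. u = v.
  Transitivity: winding around the simple cycles at both ends pads a path u \<rightarrow> v \<rightarrow> w
  to a length divisible by the product of their lengths.\<close>

fun walk :: "('v, 'a) quiver \<Rightarrow> 'v \<Rightarrow> 'a list \<Rightarrow> 'v \<Rightarrow> bool" where
  "walk Q v [] w \<longleftrightarrow> v = w"
| "walk Q v (a # p) w \<longleftrightarrow> a \<in> arrs Q \<and> src Q a = v \<and> walk Q (tgt Q a) p w"

lemma is_path_Cons:
  "p \<noteq> [] \<Longrightarrow> is_path Q (a # p) \<longleftrightarrow> a \<in> arrs Q \<and> tgt Q a = src Q (hd p) \<and> is_path Q p"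
  unfolding is_path_def by (auto simp: hd_conv_nth nth_Cons split: nat.splits)

lemma path_from_to_iff_walk: "path_from_to Q v w p \<longleftrightarrow> p \<noteq> [] \<and> walk Q v p w"
proof (induction p arbitrary: v)
  case Nil
  then show ?case by (simp add: path_from_to_def is_path_def)
next
  case (Cons a p)
  show ?case
  proof (cases "p = []")
    case True
    then show ?thesis by (auto simp: path_from_to_def is_path_def)
  next
    case False
    then have "path_from_to Q v w (a # p) \<longleftrightarrow>
        a \<in> arrs Q \<and> src Q a = v \<and> path_from_to Q (tgt Q a) w p"
      by (auto simp: path_from_to_def is_path_Cons)
    with Cons.IH False show ?thesis by simp
  qed
qed

lemma walk_append: "walk Q u (p @ q) w \<longleftrightarrow> (\<exists>v. walk Q u p v \<and> walk Q v q w)"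
  by (induction p arbitrary: u) auto

lemma walk_target_unique: "walk Q u p v \<Longrightarrow> walk Q u p v' \<Longrightarrow> v = v'"
  by (induction p arbitrary: u) auto

lemma walk_concat: "(\<And>x. x \<in> set xs \<Longrightarrow> walk Q u x u) \<Longrightarrow> walk Q u (concat xs) u"
  by (induction xs) (auto simp: walk_append)

lemma walk_concat_replicate: "walk Q u c u \<Longrightarrow> walk Q u (concat (replicate t c)) u"
  by (rule walk_concat) auto

lemma length_concat_replicate: "length (concat (replicate t c)) = t * length c"
  by (induction t) auto

lemma closed_walk_of_simple_cycle:
  assumes "on_simple_cycle_of_length Q u n"
  obtains c where "walk Q u c u" "length c = n"
proof -
  obtain c where c: "simple_cycle Q c" "length c = n" "u \<in> src Q ` set c"
    using assms unfolding on_simple_cycle_of_length_def by blast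
  define s where "s = src Q (hd c)"
  have "walk Q s c s"
    using c(1) path_from_to_iff_walk unfolding simple_cycle_def path_from_to_def s_def by metis
  moreover obtain a c1 c2 where "c = c1 @ a # c2" "src Q a = u"
    using c(3) split_list by (metis imageE)
  ultimately obtain x where "walk Q s c1 x" "walk Q x (a # c2) s"
    using walk_append by metis
  then have "walk Q u ((a # c2) @ c1) u"
    using \<open>src Q a = u\<close> walk_append by fastforce
  moreover have "length ((a # c2) @ c1) = n"
    using c(2) \<open>c = c1 @ a # c2\<close> by simp
  ultimately show thesis by (rule that)
qed

lemma path_length_factors_pos:
  assumes "path_from_to Q v w p" "length p = k * (n * m)"
  shows "k > 0" "n > 0" "m > 0"
proof -
  have "length p > 0" using assms(1) by (simp add: path_from_to_def is_path_def)
  then show "k > 0" "n > 0" "m > 0" using assms(2) by simp_all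
qed

lemma square_le_power_two: "4 \<le> j \<Longrightarrow> j * j \<le> (2::nat) ^ j"
proof (induction j rule: dec_induct)
  case base
  then show ?case by simp
next
  case (step j)
  have "2 * j + 1 \<le> j * j"
    using mult_right_mono[of 3 j j] step(1) by linarith
  then have "Suc j * Suc j \<le> j * j + j * j" by simp
  also have "\<dots> \<le> 2 ^ Suc j" using step(3) by simp
  finally show ?case .
qed

lemma power_two_beats_polynomial: "\<exists>k\<ge>1. C * (k * L) ^ d < (2::nat) ^ k"
proof -
  define B where "B = C * L ^ d"
  define j where "j = B + d + 4"
  define k where "k = (2::nat) ^ j"
  have "B + j * d \<le> j * j"
    unfolding j_def by (simp add: algebra_simps)
  also have "\<dots> \<le> k"
    unfolding k_def using square_le_power_two[of j] j_def by simp
  finally have "B + j * d \<le> k" .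
  have "C * (k * L) ^ d = B * 2 ^ (j * d)"
    by (simp add: B_def k_def power_mult_distrib power_mult[symmetric] mult.commute)
  also have "\<dots> < 2 ^ B * 2 ^ (j * d)" using less_exp[of B] by simp
  also have "\<dots> = 2 ^ (B + j * d)" by (simp add: power_add)
  also have "\<dots> \<le> 2 ^ k" using \<open>B + j * d \<le> k\<close> by (intro power_increasing) auto
  finally show ?thesis using k_def by (intro exI[of _ k]) auto
qed

lemma inj_on_concat_choice:
  assumes "length X = length Y" "X \<noteq> Y"
  shows "inj_on (\<lambda>bs. concat (map (\<lambda>b. if b then X else Y) bs)) {bs. length bs = k}"
proof -
  have "bs = bs'"
    if "length bs = length bs'"
      "concat (map (\<lambda>b. if b then X else Y) bs) = concat (map (\<lambda>b. if b then X else Y) bs')"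
    for bs bs'
    using that
  proof (induction bs arbitrary: bs')
    case Nil
    then show ?case by simp
  next
    case (Cons b bs)
    then obtain b' bs'' where "bs' = b' # bs''" by (cases bs') auto
    with Cons.prems assms show ?case
      using Cons.IH append_eq_append_conv[of "if b then X else Y" "if b' then X else Y"]
      by (cases b; cases b') auto
  qed
  then show ?thesis by (auto intro: inj_onI)
qed

lemma finite_paths_length_le:
  assumes "finite_quiver Q"
  shows "finite {p. is_path Q p \<and> length p \<le> n}"
proof (rule finite_subset)
  show "{p. is_path Q p \<and> length p \<le> n} \<subseteq> {p. set p \<subseteq> arrs Q \<and> length p \<le> n}"
    unfolding is_path_def by auto
  show "finite {p. set p \<subseteq> arrs Q \<and> length p \<le> n}"
    using assms unfolding finite_quiver_def by (intro finite_lists_length_le) auto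
qed

lemma closed_walks_unique:
  assumes "finite_quiver Q" "finite_GKdim Q"
    and "walk Q u X u" "walk Q u Y u" "length X = length Y" "X \<noteq> []"
  shows "X = Y"
proof (rule ccontr)
  assume "X \<noteq> Y"
  define L where "L = length X"
  have "L \<ge> 1" using assms(6) unfolding L_def by (simp add: Suc_le_eq)
  obtain C d :: nat where poly:
    "\<forall>n\<ge>1. card (verts Q) + card {p. is_path Q p \<and> length p \<le> n} \<le> C * n ^ d"
    using assms(2) unfolding finite_GKdim_def by blast
  obtain k where "k \<ge> 1" and exp: "C * (k * L) ^ d < 2 ^ k"
    using power_two_beats_polynomial by blast
  define f where "f = (\<lambda>bs. concat (map (\<lambda>b. if b then X else Y) bs))"
  define B where "B = {bs :: bool list. length bs = k}"
  define P where "P = {p. is_path Q p \<and> length p \<le> k * L}"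
  have "f ` B \<subseteq> P"
  proof
    fix p assume "p \<in> f ` B"
    then obtain bs where "length bs = k" "p = f bs" unfolding B_def by blast
    moreover have "length (f bs) = length bs * L" for bs
      unfolding f_def L_def using assms(5) by (induction bs) auto
    moreover have "walk Q u (f bs) u" for bs
      unfolding f_def using assms(3,4) by (intro walk_concat) auto
    ultimately have "length p = k * L" "walk Q u p u" by simp_all
    moreover have "p \<noteq> []" using \<open>length p = k * L\<close> \<open>k \<ge> 1\<close> \<open>L \<ge> 1\<close> by auto
    ultimately show "p \<in> P"
      using path_from_to_iff_walk unfolding P_def path_from_to_def by fastforce
  qed
  have "2 ^ k = card (f ` B)"
    using card_image[OF inj_on_concat_choice[OF assms(5) \<open>X \<noteq> Y\<close>]]
      card_lists_length_eq[of "UNIV :: bool set" k]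
    unfolding f_def B_def by simp
  also have "\<dots> \<le> card P"
    using card_mono[OF _ \<open>f ` B \<subseteq> P\<close>] finite_paths_length_le[OF assms(1)]
    unfolding P_def by blast
  also have "\<dots> \<le> C * (k * L) ^ d"
    using poly[rule_format, of "k * L"] \<open>k \<ge> 1\<close> \<open>L \<ge> 1\<close> unfolding P_def
    by (simp add: one_le_mult_iff)
  finally show False using exp by simp
qed

lemma ext_arrow_trans:
  assumes "ext_arrow Q u v" "ext_arrow Q v w" "u \<noteq> w"
  shows "ext_arrow Q u w"
proof -
  obtain n1 m1 p1 k1 where u: "on_simple_cycle_of_length Q u n1"
      and p1: "path_from_to Q u v p1" "length p1 = k1 * (n1 * m1)"
    using assms(1) unfolding ext_arrow_def by blast
  obtain n2 m2 p2 k2 where w: "on_simple_cycle_of_length Q w m2"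
      and p2: "path_from_to Q v w p2" "length p2 = k2 * (n2 * m2)"
    using assms(2) unfolding ext_arrow_def by blast
  obtain cu where cu: "walk Q u cu u" "length cu = n1"
    using closed_walk_of_simple_cycle[OF u] by blast
  obtain cw where cw: "walk Q w cw w" "length cw = m2"
    using closed_walk_of_simple_cycle[OF w] by blast
  define r where "r = concat (replicate (k1 * m1 * (m2 - 1)) cu) @ p1 @ p2 @
                      concat (replicate (k2 * n2 * (n1 - 1)) cw)"
  have "walk Q u p1 v" "walk Q v p2 w"
    using p1(1) p2(1) by (simp_all add: path_from_to_iff_walk)
  then have "walk Q u r w"
    using walk_concat_replicate[OF cu(1)] walk_concat_replicate[OF cw(1)]
    unfolding r_def walk_append by blast
  moreover have "r \<noteq> []"
    using p1(1) unfolding r_def path_from_to_def is_path_def by simp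
  ultimately have "path_from_to Q u w r"
    by (simp add: path_from_to_iff_walk)
  moreover have "length r = (k1 * m1 + k2 * n2) * (n1 * m2)"
  proof -
    have "length r = k1 * m1 * ((m2 - 1) + 1) * n1 + k2 * n2 * ((n1 - 1) + 1) * m2"
      unfolding r_def using p1(2) p2(2) cu(2) cw(2)
      by (simp add: length_concat_replicate algebra_simps)
    also have "\<dots> = (k1 * m1 + k2 * n2) * (n1 * m2)"
      using path_length_factors_pos[OF p1] path_length_factors_pos[OF p2]
      by (simp add: algebra_simps)
    finally show ?thesis .
  qed
  moreover have "k1 * m1 + k2 * n2 \<ge> 1"
    using path_length_factors_pos[OF p1] by (simp add: Suc_le_eq)
  ultimately have "\<exists>n m p k. on_simple_cycle_of_length Q u n \<and> on_simple_cycle_of_length Q w m \<and>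
      path_from_to Q u w p \<and> k \<ge> 1 \<and> length p = k * (n * m)"
    using u w by blast
  moreover have "cyclic_vertex Q u" "cyclic_vertex Q w"
    using assms(1,2) unfolding ext_arrow_def by simp_all
  ultimately show ?thesis
    unfolding ext_arrow_def using \<open>u \<noteq> w\<close> by blast
qed

lemma ext_arrow_asym:
  assumes "finite_quiver Q" "finite_GKdim Q" "ext_arrow Q u v"
  shows "\<not> ext_arrow Q v u"
proof
  assume "ext_arrow Q v u"
  then obtain q where q: "path_from_to Q v u q"
    unfolding ext_arrow_def by blast
  obtain n m p k where u: "on_simple_cycle_of_length Q u n" and "u \<noteq> v"
      and p: "path_from_to Q u v p" "length p = k * (n * m)"
    using assms(3) unfolding ext_arrow_def by blast
  obtain cu where cu: "walk Q u cu u" "length cu = n"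
    using closed_walk_of_simple_cycle[OF u] by blast
  have "n > 0" using path_length_factors_pos[OF p] by simp
  have walks: "walk Q u p v" "walk Q v q u"
    using p(1) q by (simp_all add: path_from_to_iff_walk)
  define c where "c = p @ q"
  have "walk Q u c u" unfolding c_def using walks walk_append by metis
  have "c \<noteq> []" using p(1) unfolding c_def path_from_to_def is_path_def by simp
  have powers_eq: "concat (replicate (length c) cu) = concat (replicate n c)"
  proof (rule closed_walks_unique[OF assms(1,2)])
    show "walk Q u (concat (replicate (length c) cu)) u"
      using cu(1) by (rule walk_concat_replicate)
    show "walk Q u (concat (replicate n c)) u"
      using \<open>walk Q u c u\<close> by (rule walk_concat_replicate)
    show "length (concat (replicate (length c) cu)) = length (concat (replicate n c))"
      using cu(2) by (simp add: length_concat_replicate)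
    have "length (concat (replicate (length c) cu)) > 0"
      using \<open>c \<noteq> []\<close> \<open>n > 0\<close> cu(2) by (simp add: length_concat_replicate)
    then show "concat (replicate (length c) cu) \<noteq> []" by auto
  qed
  obtain r where "length c = k * m + r"
  proof -
    have "k * m \<le> length p" using p(2) \<open>n > 0\<close> by simp
    then show thesis using that[of "length c - k * m"] unfolding c_def by simp
  qed
  obtain n' where "n = Suc n'" using \<open>n > 0\<close> not0_implies_Suc by blast
  have "concat (replicate (k * m) cu) @ concat (replicate r cu) = concat (replicate (length c) cu)"
    by (simp add: \<open>length c = k * m + r\<close> replicate_add)
  also have "\<dots> = p @ q @ concat (replicate n' c)"
    unfolding powers_eq by (simp add: \<open>n = Suc n'\<close> c_def)
  finally have "p = concat (replicate (k * m) cu)"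
    using p(2) cu(2) append_eq_append_conv[of "concat (replicate (k * m) cu)" p]
    by (simp add: length_concat_replicate)
  then have "walk Q u p u" using walk_concat_replicate[OF cu(1)] by simp
  then show False using walks(1) walk_target_unique \<open>u \<noteq> v\<close> by metis
qed

theorem proposition7p1:
  fixes Q :: "('v, 'a) quiver"
  assumes "finite_quiver Q"
    and "finite_GKdim Q"
  shows "partial_order_on (cyclic_vertices Q) (ext_preceq Q)"
  unfolding partial_order_on_def preorder_on_def
proof (intro conjI)
  show "ext_preceq Q \<subseteq> cyclic_vertices Q \<times> cyclic_vertices Q"
    and "refl_on (cyclic_vertices Q) (ext_preceq Q)"
    unfolding ext_preceq_def refl_on_def by auto
  show "antisym (ext_preceq Q)"
    unfolding antisym_def ext_preceq_def using ext_arrow_asym[OF assms] by auto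
  show "trans (ext_preceq Q)"
  proof (rule transI)
    fix u v w
    assume "(u, v) \<in> ext_preceq Q" "(v, w) \<in> ext_preceq Q"
    then show "(u, w) \<in> ext_preceq Q"
      unfolding ext_preceq_def using ext_arrow_trans[of Q u v w] by auto
  qed
qed

end
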